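(* Let $\mathcal{C}$ be a graph class that is locally almost near-covered with respect to functions $k,m:\mathbb{N}\to\mathbb{N}$, and set $t:=m(2)\cdot k(2)+m(2)+1$. Then no graph in $\mathcal{C}$ contains a half-graph of order $t$ as a semi-induced subgraph.
   Context: $N^G(v)$ is the set of neighbors of $v$; $N_r^G(v)$ is the closed $r$-neighborhood of $v$ (vertices at distance at most $r$, including $v$). Two vertices are $k$-near-twins in $G$ if $|N^G(u)\,\Delta\,N^G(v)|\le k$. $G$ is $(k,m)$-near-covered if every set of vertices that are pairwise not $k$-near-twins has size at most $m$. $\mathcal{C}$ is locally almost near-covered with respect to $k,m$ if for every $r$, every $G\in\mathcal{C}$ and every $v\in V(G)$, the induced subgraph $G[N_r^G(v)]$ is $(k(r),m(r))$-near-covered. $G$ contains a half-graph of order $t$ as a semi-induced subgraph if there are distinct vertices $u_1,\dots,u_t,w_1,\dots,w_t$ of $G$ with $u_iw_j\in E(G)$ iff $i\le j$ (other edges arbitrary). *)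

theory Defs
  imports Main
begin

type_synonym 'a graph = "'a set \<times> ('a \<Rightarrow> 'a \<Rightarrow> bool)"

definition verts :: "'a graph \<Rightarrow> 'a set" where "verts G = fst G"
definition adj :: "'a graph \<Rightarrow> 'a \<Rightarrow> 'a \<Rightarrow> bool" where "adj G = snd G"

definition simple_graph :: "'a graph \<Rightarrow> bool" where
  "simple_graph G \<longleftrightarrow> finite (verts G)
     \<and> (\<forall>u v. adj G u v \<longrightarrow> u \<in> verts G \<and> v \<in> verts G)
     \<and> (\<forall>u v. adj G u v \<longrightarrow> adj G v u)
     \<and> (\<forall>u. \<not> adj G u u)"

definition neighbors :: "'a graph \<Rightarrow> 'a \<Rightarrow> 'a set" where
  "neighbors G v = {u \<in> verts G. adj G v u}"

fun ball :: "'a graph \<Rightarrow> 'a \<Rightarrow> nat \<Rightarrow> 'a set" where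
  "ball G v 0 = {v}"
| "ball G v (Suc r) = ball G v r \<union> {u \<in> verts G. \<exists>w \<in> ball G v r. adj G w u}"

definition induced :: "'a graph \<Rightarrow> 'a set \<Rightarrow> 'a graph" where
  "induced G S = (verts G \<inter> S, \<lambda>u v. adj G u v \<and> u \<in> S \<and> v \<in> S)"

definition near_twins :: "'a graph \<Rightarrow> nat \<Rightarrow> 'a \<Rightarrow> 'a \<Rightarrow> bool" where
  "near_twins G k u v \<longleftrightarrow>
     card ((neighbors G u - neighbors G v) \<union> (neighbors G v - neighbors G u)) \<le> k"

definition near_covered :: "nat \<Rightarrow> nat \<Rightarrow> 'a graph \<Rightarrow> bool" where
  "near_covered k m G \<longleftrightarrow>
     (\<forall>X \<subseteq> verts G. (\<forall>u\<in>X. \<forall>v\<in>X. u \<noteq> v \<longrightarrow> \<not> near_twins G k u v) \<longrightarrow> card X \<le> m)"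

definition locally_almost_near_covered ::
  "'a graph set \<Rightarrow> (nat \<Rightarrow> nat) \<Rightarrow> (nat \<Rightarrow> nat) \<Rightarrow> bool" where
  "locally_almost_near_covered C k m \<longleftrightarrow>
     (\<forall>r. \<forall>G\<in>C. \<forall>v\<in>verts G. near_covered (k r) (m r) (induced G (ball G v r)))"

definition has_semi_induced_half_graph :: "'a graph \<Rightarrow> nat \<Rightarrow> bool" where
  "has_semi_induced_half_graph G t \<longleftrightarrow>
     (\<exists>u w :: nat \<Rightarrow> 'a.
        inj_on u {1..t} \<and> inj_on w {1..t} \<and> u ` {1..t} \<inter> w ` {1..t} = {}
      \<and> u ` {1..t} \<subseteq> verts G \<and> w ` {1..t} \<subseteq> verts G
      \<and> (\<forall>i\<in>{1..t}. \<forall>j\<in>{1..t}. adj G (u i) (w j) \<longleftrightarrow> i \<le> j))"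

end

theory Submission
  imports Defs
begin

text \<open>All vertices of a half-graph of order t lie within distance 2 of its last vertex \<open>w t\<close>:
  every \<open>u i\<close> is adjacent to \<open>w t\<close> and every \<open>w j\<close> to \<open>u 1\<close>. Inside this ball, \<open>u i\<close> and \<open>u i'\<close>
  with \<open>i + k < i'\<close> are not k-near-twins, because \<open>w i, \<dots>, w (i' - 1)\<close> are neighbours of \<open>u i\<close>
  but not of \<open>u i'\<close>. Thus \<open>u 1, u (k + 2), \<dots>, u (1 + m (k + 1))\<close> are m + 1 pairwise non-near-twins
  in the 2-ball, which is impossible when \<open>t > m k + m\<close>.\<close>

definition semi_induced_half_graph :: "'a graph \<Rightarrow> nat \<Rightarrow> (nat \<Rightarrow> 'a) \<Rightarrow> (nat \<Rightarrow> 'a) \<Rightarrow> bool" where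
  "semi_induced_half_graph G t u w \<longleftrightarrow>
     inj_on u {1..t} \<and> inj_on w {1..t} \<and> u ` {1..t} \<inter> w ` {1..t} = {}
   \<and> u ` {1..t} \<subseteq> verts G \<and> w ` {1..t} \<subseteq> verts G
   \<and> (\<forall>i\<in>{1..t}. \<forall>j\<in>{1..t}. adj G (u i) (w j) \<longleftrightarrow> i \<le> j)"

lemma has_semi_induced_half_graph_iff:
  "has_semi_induced_half_graph G t \<longleftrightarrow> (\<exists>u w. semi_induced_half_graph G t u w)"
  unfolding has_semi_induced_half_graph_def semi_induced_half_graph_def ..

lemma semi_induced_half_graph_verts:
  assumes "semi_induced_half_graph G t u w" and "i \<in> {1..t}"
  shows "u i \<in> verts G" and "w i \<in> verts G"
  using assms by (auto simp: semi_induced_half_graph_def image_subset_iff)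

lemma semi_induced_half_graph_adj:
  assumes "semi_induced_half_graph G t u w" and "i \<in> {1..t}" and "j \<in> {1..t}"
  shows "adj G (u i) (w j) \<longleftrightarrow> i \<le> j"
  using assms by (simp add: semi_induced_half_graph_def)

lemma neighbors_induced:
  "neighbors (induced G S) x = (if x \<in> S then neighbors G x \<inter> S else {})"
  by (auto simp: neighbors_def induced_def verts_def adj_def)

lemma verts_induced: "verts (induced G S) = verts G \<inter> S"
  by (simp add: induced_def verts_def)

lemma finite_neighbors: "finite (verts G) \<Longrightarrow> finite (neighbors G x)"
  by (simp add: neighbors_def)

lemma near_twins_sym: "near_twins G k x y \<longleftrightarrow> near_twins G k y x"
  by (simp add: near_twins_def Un_commute)

lemma not_near_twins_if_private_neighbors:
  assumes "finite (verts G)" and "A \<subseteq> neighbors G x - neighbors G y" and "k < card A"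
  shows "\<not> near_twins G k x y"
proof -
  let ?D = "(neighbors G x - neighbors G y) \<union> (neighbors G y - neighbors G x)"
  have "card A \<le> card ?D"
    using assms(1,2) by (intro card_mono) (auto simp: finite_neighbors)
  with assms(3) show ?thesis
    by (simp add: near_twins_def)
qed

lemma ball_Suc_memI:
  "y \<in> ball G v r \<Longrightarrow> adj G y x \<Longrightarrow> x \<in> verts G \<Longrightarrow> x \<in> ball G v (Suc r)"
  by auto

lemma semi_induced_half_graph_subset_ball:
  assumes "simple_graph G" and "semi_induced_half_graph G t u w" and "1 \<le> t"
  shows "u ` {1..t} \<union> w ` {1..t} \<subseteq> ball G (w t) 2"
proof -
  have u_ball: "u i \<in> ball G (w t) 1" if "i \<in> {1..t}" for i
  proof -
    have "adj G (u i) (w t)"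
      using semi_induced_half_graph_adj[OF assms(2) that] assms(3) that by simp
    then have "adj G (w t) (u i)"
      using assms(1) by (simp add: simple_graph_def)
    then show ?thesis
      using semi_induced_half_graph_verts[OF assms(2) that] by (simp add: One_nat_def)
  qed
  have w_ball: "w j \<in> ball G (w t) 2" if "j \<in> {1..t}" for j
  proof -
    have "adj G (u 1) (w j)" and "w j \<in> verts G"
      using semi_induced_half_graph_adj[OF assms(2) _ that] semi_induced_half_graph_verts[OF assms(2) that]
        assms(3) that by auto
    with u_ball[of 1] assms(3) show ?thesis
      using ball_Suc_memI[of "u 1" G "w t" 1] by (simp add: numeral_2_eq_2)
  qed
  have "ball G (w t) 1 \<subseteq> ball G (w t) 2"
    by (auto simp: numeral_2_eq_2)
  with u_ball w_ball show ?thesis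
    by blast
qed

lemma semi_induced_half_graph_not_near_twins:
  assumes "finite (verts G)" and hg: "semi_induced_half_graph G t u w"
    and S: "u ` {1..t} \<union> w ` {1..t} \<subseteq> S"
    and i: "i \<in> {1..t}" and i': "i' \<in> {1..t}" and "i + k < i'"
  shows "\<not> near_twins (induced G S) k (u i) (u i')"
proof (rule not_near_twins_if_private_neighbors)
  show "finite (verts (induced G S))"
    using assms(1) by (simp add: verts_induced)
  have "{i..<i'} \<subseteq> {1..t}"
    using i i' by auto
  moreover have "inj_on w {1..t}"
    using hg by (simp add: semi_induced_half_graph_def)
  ultimately have "card (w ` {i..<i'}) = i' - i"
    by (simp add: card_image inj_on_subset)
  then show "k < card (w ` {i..<i'})"
    using \<open>i + k < i'\<close> by simp
  show "w ` {i..<i'} \<subseteq> neighbors (induced G S) (u i) - neighbors (induced G S) (u i')"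
  proof
    fix y assume "y \<in> w ` {i..<i'}"
    then obtain j where j: "i \<le> j" "j < i'" "y = w j"
      by auto
    with i i' have "j \<in> {1..t}"
      by simp
    then have "adj G (u i) (w j)" and "\<not> adj G (u i') (w j)" and "w j \<in> verts G"
      using semi_induced_half_graph_adj[OF hg] semi_induced_half_graph_verts[OF hg] i i' j
      by auto
    moreover have "u i \<in> S" and "u i' \<in> S" and "w j \<in> S"
      using S i i' \<open>j \<in> {1..t}\<close> by auto
    ultimately show "y \<in> neighbors (induced G S) (u i) - neighbors (induced G S) (u i')"
      unfolding neighbors_induced using j by (simp add: neighbors_def)
  qed
qed

lemma near_covered_spread_sequence_le:
  assumes "near_covered k m H" and "inj_on x {1..t}" and "x ` {1..t} \<subseteq> verts H"
    and apart: "\<And>i i'. i \<in> {1..t} \<Longrightarrow> i' \<in> {1..t} \<Longrightarrow> i + k < i' \<Longrightarrow> \<not> near_twins H k (x i) (x i')"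
  shows "t \<le> m * k + m"
proof (rule ccontr)
  assume "\<not> t \<le> m * k + m"
  define idx where "idx s = 1 + s * (k + 1)" for s
  have idx_range: "idx s \<in> {1..t}" if "s \<le> m" for s
    using \<open>\<not> t \<le> m * k + m\<close> mult_right_mono[OF that, of "k + 1"] by (simp add: idx_def)
  have idx_gap: "idx s + k < idx s'" if "s < s'" for s s'
    using mult_right_mono[of "s + 1" s' "k + 1"] that by (simp add: idx_def)
  have "strict_mono idx"
    by (rule strict_monoI) (use idx_gap in fastforce)
  moreover have "idx ` {0..m} \<subseteq> {1..t}"
    using idx_range by auto
  ultimately have inj: "inj_on (x \<circ> idx) {0..m}"
    using assms(2) by (blast intro: comp_inj_on strict_mono_imp_inj_on inj_on_subset)
  let ?X = "(x \<circ> idx) ` {0..m}"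
  have "\<not> near_twins H k a b" if "a \<in> ?X" "b \<in> ?X" "a \<noteq> b" for a b
  proof -
    obtain s s' where "s \<le> m" "s' \<le> m" "a = x (idx s)" "b = x (idx s')"
      using \<open>a \<in> ?X\<close> \<open>b \<in> ?X\<close> by auto
    moreover from this \<open>a \<noteq> b\<close> have "s \<noteq> s'"
      by blast
    ultimately show ?thesis
      using apart[OF idx_range idx_range idx_gap] near_twins_sym[of H k a b]
      by (metis linorder_neqE_nat)
  qed
  moreover have "?X \<subseteq> verts H"
    using assms(3) idx_range by auto
  ultimately have "card ?X \<le> m"
    using assms(1) by (simp add: near_covered_def)
  with card_image[OF inj] show False
    by simp
qed

theorem lemma5p12:
  fixes C :: "'a graph set" and k m :: "nat \<Rightarrow> nat"
  assumes "\<forall>G\<in>C. simple_graph G"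
    and "locally_almost_near_covered C k m"
  shows "\<forall>G\<in>C. \<not> has_semi_induced_half_graph G (m 2 * k 2 + m 2 + 1)"
proof (intro ballI notI)
  fix G assume "G \<in> C" and "has_semi_induced_half_graph G (m 2 * k 2 + m 2 + 1)"
  define t where "t = m 2 * k 2 + m 2 + 1"
  obtain u w where hg: "semi_induced_half_graph G t u w"
    using \<open>has_semi_induced_half_graph G _\<close> by (auto simp: has_semi_induced_half_graph_iff t_def)
  have G: "simple_graph G"
    using assms(1) \<open>G \<in> C\<close> by blast
  define B where "B = ball G (w t) 2"
  have B: "u ` {1..t} \<union> w ` {1..t} \<subseteq> B"
    using semi_induced_half_graph_subset_ball[OF G hg] by (simp add: B_def t_def)
  have "w t \<in> verts G"
    using semi_induced_half_graph_verts[OF hg] by (simp add: t_def)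
  then have "near_covered (k 2) (m 2) (induced G B)"
    using assms(2) \<open>G \<in> C\<close> by (simp add: locally_almost_near_covered_def B_def)
  moreover have "inj_on u {1..t}"
    using hg by (simp add: semi_induced_half_graph_def)
  moreover have "u ` {1..t} \<subseteq> verts (induced G B)"
    using B semi_induced_half_graph_verts[OF hg] by (auto simp: verts_induced)
  moreover have "finite (verts G)"
    using G by (simp add: simple_graph_def)
  ultimately have "t \<le> m 2 * k 2 + m 2"
    using near_covered_spread_sequence_le semi_induced_half_graph_not_near_twins[OF _ hg B]
    by metis
  then show False
    by (simp add: t_def)
qed

end
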